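(* Let $q$ be a prime power and $n\ge 3$. If $\mathcal{L}$ is a Cameron-Liebler $(n-2)$-set of $\mathrm{AG}(n,q)$ with parameter $x$, then $\frac{x(x-1)}{2}\equiv 0 \pmod{q+1}$.
   Context: $\mathrm{AG}(n,q)$ is $\mathrm{PG}(n,q)$ with a hyperplane $\pi_\infty$ removed; affine $k$-spaces are $k$-dimensional projective subspaces not contained in $\pi_\infty$. With $A_n$ the incidence matrix of affine points versus affine $k$-spaces, a set $\mathcal{L}$ of affine $k$-spaces is a Cameron-Liebler $k$-set of $\mathrm{AG}(n,q)$ if its characteristic vector lies in the real row space $\mathrm{Im}(A_n^T)$; its parameter is $|\mathcal{L}|/\left[{n\atop k}\right]_q$, where $\left[{a\atop b}\right]_q=\frac{(q^a-1)\cdots(q^{a-b+1}-1)}{(q^b-1)\cdots(q-1)}$. *)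

theory Defs
  imports Complex_Main "HOL-Analysis.Finite_Cartesian_Product"
begin

text \<open>The affine space AG(n,q): points are vectors in F^n with F a finite field of
order q (F = 'a, n = CARD('n)).\<close>

definition lin_indep :: "nat \<Rightarrow> (nat \<Rightarrow> 'a::field ^ 'n) \<Rightarrow> bool" where
  "lin_indep k vs \<longleftrightarrow>
     (\<forall>c :: nat \<Rightarrow> 'a. (\<Sum>i<k. c i *s vs i) = 0 \<longrightarrow> (\<forall>i<k. c i = 0))"

definition affine_kspace :: "nat \<Rightarrow> ('a::field ^ 'n) set \<Rightarrow> bool" where
  "affine_kspace k S \<longleftrightarrow>
     (\<exists>p vs. lin_indep k vs \<and> S = {p + (\<Sum>i<k. c i *s vs i) | c :: nat \<Rightarrow> 'a. True})"

text \<open>Characteristic vector of L lies in the real row space Im(A^T) of the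
point/k-space incidence matrix A: there is f on points with
chi_L(S) = sum_{p in S} f(p) for every affine k-space S.\<close>

definition cameron_liebler_kset :: "nat \<Rightarrow> ('a::{finite,field} ^ 'n) set set \<Rightarrow> bool" where
  "cameron_liebler_kset k L \<longleftrightarrow>
     L \<subseteq> {S. affine_kspace k S} \<and>
     (\<exists>f :: 'a ^ 'n \<Rightarrow> real. \<forall>S. affine_kspace k S \<longrightarrow>
        (if S \<in> L then 1 else 0) = (\<Sum>p\<in>S. f p))"

definition gauss_binom :: "nat \<Rightarrow> nat \<Rightarrow> nat \<Rightarrow> real" where
  "gauss_binom q a b = (\<Prod>i<b. (real q ^ (a - i) - 1) / (real q ^ (i + 1) - 1))"

definition cl_parameter :: "nat \<Rightarrow> ('a::{finite,field} ^ 'n) set set \<Rightarrow> real" where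
  "cl_parameter k L = real (card L) / gauss_binom CARD('a) CARD('n) k"

end

(* Let f be a weight on the points realising L, i.e. chi_L(S) = sum of f over S for every
   affine (n-2)-space S.  Counting incident pairs (point, (n-2)-space) shows that the
   parameter x is the total weight sum f.  Projecting AG(n,q) onto three coordinates, the
   preimage of every affine line of AG(3,q) is an affine (n-2)-space, so the pushed-forward
   weight F on AG(3,q) has all line sums in {0,1}.

   For such an F put X = sum F and S = sum F^2.  Double counting weighted incidences of
   points with lines gives X^2 - X = q(q+1)(X - S); doing the same with planes gives
   2T = q(q^2+q+1)(X - S), where T, the sum of F(P)(F(P)-1)/2 over all planes P, is an
   integer because every plane is a disjoint union of parallel lines.  Hence
   (q+1) T = (q^2+q+1) X(X-1)/2, and q^2+q+1 = q(q+1)+1 is coprime to q+1. *)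

theory Submission
  imports Defs "HOL-Analysis.Cartesian_Space"
begin

section \<open>Weighted lines and hyperplanes of AG(m, q)\<close>

definition dotp :: "'a::field^'n \<Rightarrow> 'a^'n \<Rightarrow> 'a" where
  "dotp a v = (\<Sum>i\<in>UNIV. a$i * v$i)"

lemma dotp_add_left: "dotp (u + v) a = dotp u a + dotp v a"
  and dotp_add_right: "dotp a (u + v) = dotp a u + dotp a v"
  and dotp_diff_left: "dotp (u - v) a = dotp u a - dotp v a"
  and dotp_diff_right: "dotp a (u - v) = dotp a u - dotp a v"
  and dotp_scale_left: "dotp (t *s a) v = t * dotp a v"
  and dotp_scale_right: "dotp a (t *s v) = t * dotp a v"
  by (simp_all add: dotp_def algebra_simps sum.distrib sum_subtractf sum_distrib_left)

lemma dotp_commute: "dotp a v = dotp v a"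
  by (simp add: dotp_def mult.commute)

lemma dotp_zero_left [simp]: "dotp 0 v = 0"
  and dotp_zero_right [simp]: "dotp a 0 = 0"
  by (simp_all add: dotp_def)

lemma dotp_axis_left: "dotp (axis i c) v = c * v$i"
proof -
  have "dotp (axis i c) v = (\<Sum>j\<in>UNIV. if j = i then c * v$i else 0)"
    unfolding dotp_def axis_def by (rule sum.cong) auto
  then show ?thesis by simp
qed

lemma ex_dotp_eq_1:
  fixes v :: "'a::field^'n"
  assumes "v \<noteq> 0"
  obtains b where "dotp b v = 1"
proof -
  obtain i where "v$i \<noteq> 0" using assms by (metis vec_eq_iff zero_index)
  then have "dotp (axis i (1 / v$i)) v = 1" by (simp add: dotp_axis_left)
  then show thesis by (rule that)
qed

lemma card_field_ge_2: "CARD('a::{finite,field}) \<ge> 2"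
proof -
  have "card {0::'a, 1} \<le> CARD('a)" by (rule card_mono) auto
  then show ?thesis by simp
qed

lemma real_card_Compl_zero: "real (card (- {0::'b::{finite,zero}})) = real CARD('b) - 1"
proof -
  have "card (- {0::'b}) = CARD('b) - 1"
    by (simp add: Compl_eq_Diff_UNIV card_Diff_singleton)
  then show ?thesis by (simp add: Suc_leI)
qed

lemma sum_UNIV_translate:
  fixes h :: "'b::ab_group_add \<Rightarrow> 'c::comm_monoid_add"
  shows "(\<Sum>u\<in>UNIV. h (u + v)) = (\<Sum>u\<in>UNIV. h u)"
  by (rule sum.reindex_bij_witness[of _ "\<lambda>u. u - v" "\<lambda>u. u + v"]) auto

lemma sum_UNIV_split_zero:
  fixes h :: "'b::{finite,zero} \<Rightarrow> 'c::comm_monoid_add"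
  shows "(\<Sum>t\<in>UNIV. h t) = h 0 + (\<Sum>t\<in>- {0}. h t)"
  by (simp add: Compl_eq_Diff_UNIV sum.remove)

lemma sum_Compl_zero_scale:
  fixes h :: "'a::{finite,field}^'n \<Rightarrow> 'c::comm_monoid_add"
  assumes "t \<noteq> 0"
  shows "(\<Sum>d\<in>- {0}. h (t *s d)) = (\<Sum>d\<in>- {0}. h d)"
  by (rule sum.reindex_bij_witness[of _ "\<lambda>d. (1/t) *s d" "\<lambda>d. t *s d"])
     (auto simp: assms vector_smult_assoc vec_eq_iff)

lemma card_dotp_eq:
  fixes v :: "'a::{finite,field}^'n"
  assumes "v \<noteq> 0"
  shows "card {a. dotp a v = c} = CARD('a) ^ (CARD('n) - 1)"
proof -
  obtain b where b: "dotp b v = 1" using ex_dotp_eq_1[OF assms] .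
  have level: "card {a. dotp a v = c} = card {a. dotp a v = 0}" for c
  proof -
    have "bij_betw (\<lambda>a. a + c *s b) {a. dotp a v = 0} {a. dotp a v = c}"
      by (rule bij_betw_byWitness[of _ "\<lambda>a. a - c *s b"])
         (auto simp: dotp_add_left dotp_diff_left dotp_scale_left b image_def
           intro!: exI[of _ "_ - c *s b"])
    then show ?thesis by (simp add: bij_betw_same_card)
  qed
  have "CARD('a) ^ CARD('n) = card (UNIV :: ('a^'n) set)"
    by simp
  also have "\<dots> = (\<Sum>c\<in>UNIV. card {a. dotp a v = c})"
    using sum.group[of UNIV UNIV "\<lambda>a. dotp a v" "\<lambda>_. 1::nat"] by simp
  also have "\<dots> = (\<Sum>c\<in>(UNIV::'a set). card {a. dotp a v = 0})"
    by (rule sum.cong[OF refl level])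
  also have "\<dots> = CARD('a) * card {a. dotp a v = 0}"
    by simp
  finally have "CARD('a) * CARD('a) ^ (CARD('n) - 1) = CARD('a) * card {a. dotp a v = 0}"
    by (simp add: power_eq_if)
  then show ?thesis
    using level[of c] by (simp only: mult_cancel1) simp
qed

definition line_sum :: "('a::{finite,field}^'m \<Rightarrow> real) \<Rightarrow> 'a^'m \<Rightarrow> 'a^'m \<Rightarrow> real" where
  "line_sum F u d = (\<Sum>t\<in>UNIV. F (u + t *s d))"

definition hyperplane_sum :: "('a::{finite,field}^'m \<Rightarrow> real) \<Rightarrow> 'a^'m \<Rightarrow> 'a \<Rightarrow> real" where
  "hyperplane_sum F a c = (\<Sum>w | dotp a w = c. F w)"

context
  fixes F :: "'a::{finite,field}^'m \<Rightarrow> real"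
begin

lemma line_sum_translate: "line_sum F (u + s *s d) d = line_sum F u d"
  unfolding line_sum_def
  by (rule sum.reindex_bij_witness[of _ "\<lambda>t. t - s" "\<lambda>t. t + s"])
     (simp_all add: vector_sadd_rdistrib add.commute add.left_commute)

lemma sum_line_sum: "(\<Sum>u\<in>UNIV. line_sum F u d) = real CARD('a) * (\<Sum>u\<in>UNIV. F u)"
proof -
  have "(\<Sum>u\<in>UNIV. line_sum F u d) = (\<Sum>t\<in>UNIV. \<Sum>u\<in>UNIV. F (u + t *s d))"
    unfolding line_sum_def by (rule sum.swap)
  also have "\<dots> = (\<Sum>t\<in>(UNIV::'a set). \<Sum>u\<in>UNIV. F u)"
    by (intro sum.cong refl sum_UNIV_translate)
  finally show ?thesis by simp
qed

lemma sum_mult_line_sum: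
  "real CARD('a) * (\<Sum>u\<in>UNIV. F u * line_sum F u d) = (\<Sum>u\<in>UNIV. (line_sum F u d)\<^sup>2)"
proof -
  have "real CARD('a) * (\<Sum>u\<in>UNIV. F u * line_sum F u d)
      = (\<Sum>s\<in>(UNIV::'a set). \<Sum>u\<in>UNIV. F (u + s *s d) * line_sum F (u + s *s d) d)"
    by (simp add: sum_UNIV_translate[where h = "\<lambda>u. F u * line_sum F u d"])
  also have "\<dots> = (\<Sum>s\<in>UNIV. \<Sum>u\<in>UNIV. F (u + s *s d) * line_sum F u d)"
    by (simp only: line_sum_translate)
  also have "\<dots> = (\<Sum>u\<in>UNIV. (line_sum F u d)\<^sup>2)"
    by (subst sum.swap) (simp add: line_sum_def power2_eq_square sum_distrib_right)
  finally show ?thesis .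
qed

lemma sum_line_sums_through:
  "(\<Sum>d\<in>- {0}. line_sum F u d) = (real CARD('a) ^ CARD('m) - 1) * F u
     + (real CARD('a) - 1) * ((\<Sum>w\<in>UNIV. F w) - F u)"
proof -
  have "(\<Sum>d\<in>- {0}. line_sum F u d) = (\<Sum>d\<in>- {0}. F u + (\<Sum>t\<in>- {0}. F (u + t *s d)))"
    unfolding line_sum_def by (intro sum.cong refl) (subst sum_UNIV_split_zero, simp)
  also have "\<dots> = (real CARD('a) ^ CARD('m) - 1) * F u + (\<Sum>t\<in>- {0}. \<Sum>d\<in>- {0}. F (u + t *s d))"
    by (simp add: sum.distrib real_card_Compl_zero sum.swap[of _ "- {0::'a^'m}"])
  also have "(\<Sum>t\<in>- {0}. \<Sum>d\<in>- {0}. F (u + t *s d)) = (\<Sum>t\<in>- {0::'a}. \<Sum>d\<in>- {0}. F (u + d))"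
    by (intro sum.cong refl sum_Compl_zero_scale[where h = "\<lambda>w. F (u + w)"]) simp
  also have "(\<Sum>d\<in>- {0}. F (u + d)) = (\<Sum>w\<in>UNIV. F w) - F u"
    using sum_UNIV_split_zero[of "\<lambda>d. F (u + d)"] sum_UNIV_translate[of F u]
    by (simp add: add.commute)
  finally show ?thesis by (simp add: real_card_Compl_zero)
qed

lemma line_sums_second_moment:
  assumes line_01: "\<And>u d. d \<noteq> 0 \<Longrightarrow> line_sum F u d \<in> {0, 1}"
  shows "(real CARD('a) ^ CARD('m) - 1) * (\<Sum>w\<in>UNIV. F w) =
         (real CARD('a) ^ CARD('m) - 1) * (\<Sum>w\<in>UNIV. (F w)\<^sup>2)
         + (real CARD('a) - 1) * ((\<Sum>w\<in>UNIV. F w)\<^sup>2 - (\<Sum>w\<in>UNIV. (F w)\<^sup>2))"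
proof -
  let ?X = "\<Sum>w\<in>UNIV. F w"
  have line_weight: "(\<Sum>u\<in>UNIV. F u * line_sum F u d) = ?X" if "d \<noteq> 0" for d
  proof -
    have "(line_sum F u d)\<^sup>2 = line_sum F u d" for u
      using line_01[OF that, of u] by auto
    then have "real CARD('a) * (\<Sum>u\<in>UNIV. F u * line_sum F u d) = real CARD('a) * ?X"
      by (simp add: sum_mult_line_sum sum_line_sum)
    then show ?thesis by simp
  qed
  have "(\<Sum>u\<in>UNIV. F u * (\<Sum>d\<in>- {0}. line_sum F u d)) = (\<Sum>d\<in>- {0}. \<Sum>u\<in>UNIV. F u * line_sum F u d)"
    by (simp add: sum_distrib_left sum.swap[of _ "UNIV::('a^'m) set"])
  also have "\<dots> = (real CARD('a) ^ CARD('m) - 1) * ?X"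
    by (simp add: line_weight real_card_Compl_zero)
  finally show ?thesis
    by (simp add: sum_line_sums_through algebra_simps power2_eq_square sum.distrib
        sum_subtractf sum_distrib_left sum_distrib_right)
qed

lemma hyperplane_sum_scale:
  assumes "t \<noteq> 0"
  shows "hyperplane_sum F (t *s a) (t * c) = hyperplane_sum F a c"
  using assms by (simp add: hyperplane_sum_def dotp_scale_left)

lemma sum_hyperplane_sums_scale:
  assumes "t \<noteq> 0"
  shows "(\<Sum>c\<in>UNIV. g (hyperplane_sum F (t *s a) c)) = (\<Sum>c\<in>UNIV. g (hyperplane_sum F a c))"
  by (rule sum.reindex_bij_witness[of _ "\<lambda>c. t * c" "\<lambda>c. c / t"])
     (simp_all add: assms flip: hyperplane_sum_scale[OF assms, of a])

lemma sum_hyperplane_sum: "(\<Sum>c\<in>UNIV. hyperplane_sum F a c) = (\<Sum>w\<in>UNIV. F w)"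
  unfolding hyperplane_sum_def using sum.group[of UNIV UNIV "dotp a" F] by simp

lemma sum_mult_hyperplane_sum:
  "(\<Sum>u\<in>UNIV. F u * hyperplane_sum F a (dotp a u)) = (\<Sum>c\<in>UNIV. (hyperplane_sum F a c)\<^sup>2)"
proof -
  have "(\<Sum>u\<in>UNIV. F u * hyperplane_sum F a (dotp a u))
      = (\<Sum>c\<in>UNIV. \<Sum>u | dotp a u = c. F u * hyperplane_sum F a (dotp a u))"
    using sum.group[of UNIV UNIV "dotp a" "\<lambda>u. F u * hyperplane_sum F a (dotp a u)"] by simp
  also have "\<dots> = (\<Sum>c\<in>UNIV. \<Sum>u | dotp a u = c. F u * hyperplane_sum F a c)"
    by (intro sum.cong refl) auto
  also have "\<dots> = (\<Sum>c\<in>UNIV. (hyperplane_sum F a c)\<^sup>2)"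
    by (simp add: sum_distrib_right[symmetric] hyperplane_sum_def power2_eq_square)
  finally show ?thesis .
qed

lemma card_nonzero_dotp_eq_0:
  fixes v :: "'a::{finite,field}^'m"
  assumes "v \<noteq> 0"
  shows "real (card {a. a \<noteq> 0 \<and> dotp a v = 0}) = real CARD('a) ^ (CARD('m) - 1) - 1"
proof -
  have "{a. a \<noteq> 0 \<and> dotp a v = 0} = {a. dotp a v = 0} - {0}" by auto
  then have "card {a. a \<noteq> 0 \<and> dotp a v = 0} = CARD('a) ^ (CARD('m) - 1) - 1"
    using card_dotp_eq[OF assms, of 0] by (simp add: card_Diff_singleton)
  then show ?thesis by simp
qed

lemma sum_hyperplane_sums_through:
  "(\<Sum>a\<in>- {0}. hyperplane_sum F a (dotp a u)) = (real CARD('a) ^ CARD('m) - 1) * F u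
     + (real CARD('a) ^ (CARD('m) - 1) - 1) * ((\<Sum>w\<in>UNIV. F w) - F u)"
proof -
  have nonzero: "{a::'a^'m. a \<noteq> 0} = - {0}" by auto
  have "(\<Sum>a\<in>- {0}. hyperplane_sum F a (dotp a u))
      = (\<Sum>a\<in>- {0}. \<Sum>w\<in>UNIV. if dotp a (w - u) = 0 then F w else 0)"
    by (simp add: hyperplane_sum_def sum.If_cases dotp_diff_right Collect_conv_if)
  also have "\<dots> = (\<Sum>w\<in>UNIV. F w * real (card {a. a \<noteq> 0 \<and> dotp a (w - u) = 0}))"
    by (subst sum.swap) (simp add: sum.If_cases Int_def mult.commute)
  also have "\<dots> = (\<Sum>v\<in>UNIV. F (v + u) * real (card {a. a \<noteq> 0 \<and> dotp a v = 0}))"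
    using sum_UNIV_translate[of "\<lambda>w. F w * real (card {a. a \<noteq> 0 \<and> dotp a (w - u) = 0})" u]
    by simp
  also have "\<dots> = (real CARD('a) ^ CARD('m) - 1) * F u
      + (real CARD('a) ^ (CARD('m) - 1) - 1) * (\<Sum>v\<in>- {0}. F (v + u))"
    by (subst sum_UNIV_split_zero)
       (simp add: card_nonzero_dotp_eq_0 nonzero real_card_Compl_zero sum_distrib_right mult.commute)
  also have "(\<Sum>v\<in>- {0}. F (v + u)) = (\<Sum>w\<in>UNIV. F w) - F u"
    using sum_UNIV_split_zero[of "\<lambda>v. F (v + u)"] sum_UNIV_translate[of F u] by simp
  finally show ?thesis .
qed

lemma hyperplane_sums_second_moment:
  "(\<Sum>a\<in>- {0}. \<Sum>c\<in>UNIV. (hyperplane_sum F a c)\<^sup>2) =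
     (real CARD('a) ^ CARD('m) - 1) * (\<Sum>w\<in>UNIV. (F w)\<^sup>2)
     + (real CARD('a) ^ (CARD('m) - 1) - 1) * ((\<Sum>w\<in>UNIV. F w)\<^sup>2 - (\<Sum>w\<in>UNIV. (F w)\<^sup>2))"
proof -
  have "(\<Sum>a\<in>- {0}. \<Sum>c\<in>UNIV. (hyperplane_sum F a c)\<^sup>2)
      = (\<Sum>u\<in>UNIV. F u * (\<Sum>a\<in>- {0}. hyperplane_sum F a (dotp a u)))"
    by (simp add: sum_mult_hyperplane_sum[symmetric] sum_distrib_left sum.swap[of _ "- {0}"])
  then show ?thesis
    by (simp add: sum_hyperplane_sums_through algebra_simps power2_eq_square sum.distrib
        sum_subtractf sum_distrib_left sum_distrib_right)
qed

end

lemma sum_eq_sum_parallel_line_sums: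
  fixes F :: "'a::{finite,field}^'m \<Rightarrow> real"
  assumes b: "dotp b d = 1"
    and P: "\<And>w t. w \<in> P \<longleftrightarrow> w + t *s d \<in> P"
  shows "(\<Sum>w\<in>P. F w) = (\<Sum>y | y \<in> P \<and> dotp b y = 0. line_sum F y d)"
proof -
  let ?T = "{y. y \<in> P \<and> dotp b y = 0}"
  have "(\<Sum>y\<in>?T. line_sum F y d) = (\<Sum>(y, t)\<in>?T \<times> UNIV. F (y + t *s d))"
    unfolding line_sum_def by (rule sum.cartesian_product)
  also have "\<dots> = (\<Sum>w\<in>P. F w)"
  proof (rule sum.reindex_bij_witness[of _ "\<lambda>w. (w - dotp b w *s d, dotp b w)" "\<lambda>(y, t). y + t *s d"])
    fix w assume w: "w \<in> P"
    have "w - dotp b w *s d = w + (- dotp b w) *s d"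
      by (simp add: vector_smult_lneg)
    then have "w - dotp b w *s d \<in> P" using P w by metis
    then show "(w - dotp b w *s d, dotp b w) \<in> ?T \<times> UNIV"
      by (simp add: dotp_diff_right dotp_scale_right b)
  next
    fix yt assume "yt \<in> ?T \<times> (UNIV::'a set)"
    then obtain y t where yt: "yt = (y, t)" "y \<in> P" "dotp b y = 0" by auto
    then have "dotp b (y + t *s d) = t" by (simp add: dotp_add_right dotp_scale_right b)
    then show "(\<lambda>w. (w - dotp b w *s d, dotp b w)) ((\<lambda>(y, t). y + t *s d) yt) = yt"
      by (simp add: yt)
    show "(\<lambda>(y, t). y + t *s d) yt \<in> P" using P yt by simp
  qed auto
  finally show ?thesis by simp
qed

lemma sum_in_Ints_if_line_sums_in_Ints:
  fixes F :: "'a::{finite,field}^'m \<Rightarrow> real"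
  assumes "d \<noteq> 0"
    and "\<And>y. line_sum F y d \<in> \<int>"
    and "\<And>w t. w \<in> P \<longleftrightarrow> w + t *s d \<in> P"
  shows "(\<Sum>w\<in>P. F w) \<in> \<int>"
proof -
  obtain b where "dotp b d = 1" using ex_dotp_eq_1[OF assms(1)] .
  then show ?thesis
    by (simp add: sum_eq_sum_parallel_line_sums[where P = P] assms(2,3) Ints_sum)
qed

lemma total_weight_in_Ints:
  fixes F :: "'a::{finite,field}^'m \<Rightarrow> real"
  assumes "\<And>y d. d \<noteq> 0 \<Longrightarrow> line_sum F y d \<in> \<int>"
  shows "(\<Sum>w\<in>UNIV. F w) \<in> \<int>"
proof -
  have one: "(1::'a^'m) \<noteq> 0" by (simp add: vec_eq_iff)
  show ?thesis by (rule sum_in_Ints_if_line_sums_in_Ints[OF one assms[OF one]]) simp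
qed

lemma hyperplane_sum_in_Ints:
  fixes F :: "'a::{finite,field}^'m \<Rightarrow> real"
  assumes "CARD('m) \<ge> 2" and "a \<noteq> 0"
    and "\<And>y d. d \<noteq> 0 \<Longrightarrow> line_sum F y d \<in> \<int>"
  shows "hyperplane_sum F a c \<in> \<int>"
proof -
  have "2 \<le> CARD('a) ^ 1" using card_field_ge_2 by simp
  also have "\<dots> \<le> CARD('a) ^ (CARD('m) - 1)"
    using assms(1) by (intro power_increasing) (simp_all add: Suc_leI)
  also have "\<dots> = card {d. dotp d a = 0}" using card_dotp_eq[OF assms(2)] by simp
  finally have "{d. dotp d a = 0} \<noteq> {0}" by auto
  then obtain d where d: "dotp a d = 0" "d \<noteq> 0"
    by (auto simp: dotp_commute)
  show ?thesis
    unfolding hyperplane_sum_def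
    by (rule sum_in_Ints_if_line_sums_in_Ints[OF d(2) assms(3)[OF d(2)]])
       (simp add: dotp_add_right dotp_scale_right d(1))
qed

section \<open>Representatives of the projective points\<close>

definition nonzero_multiples :: "'a::field^'m \<Rightarrow> ('a^'m) set" where
  "nonzero_multiples w = {t *s w | t. t \<noteq> 0}"

lemma self_in_nonzero_multiples: "w \<in> nonzero_multiples w"
  by (auto simp: nonzero_multiples_def intro!: exI[of _ 1])

lemma nonzero_multiples_scale:
  assumes "s \<noteq> 0"
  shows "nonzero_multiples (s *s w) = nonzero_multiples w"
proof
  show "nonzero_multiples (s *s w) \<subseteq> nonzero_multiples w"
  proof
    fix a assume "a \<in> nonzero_multiples (s *s w)"
    then obtain t where "t * s \<noteq> 0" "a = (t * s) *s w"
      using assms by (auto simp: nonzero_multiples_def vector_smult_assoc)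
    then show "a \<in> nonzero_multiples w" unfolding nonzero_multiples_def by blast
  qed
  show "nonzero_multiples w \<subseteq> nonzero_multiples (s *s w)"
  proof
    fix a assume "a \<in> nonzero_multiples w"
    then obtain t where "t / s \<noteq> 0" "a = (t / s) *s (s *s w)"
      using assms by (auto simp: nonzero_multiples_def vector_smult_assoc)
    then show "a \<in> nonzero_multiples (s *s w)" unfolding nonzero_multiples_def by blast
  qed
qed

(* SOME only sees the set nonzero_multiples w, so projective_rep is constant on projective points. *)
definition projective_rep :: "'a::field^'m \<Rightarrow> 'a^'m" where
  "projective_rep w = (SOME a. a \<in> nonzero_multiples w)"

lemma projective_rep_scale:
  assumes "s \<noteq> 0"
  shows "projective_rep (s *s w) = projective_rep w"
  by (simp only: projective_rep_def nonzero_multiples_scale[OF assms])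

lemma ex_projective_rep_factor: "\<exists>t. t \<noteq> 0 \<and> projective_rep w = t *s w"
proof -
  have "projective_rep w \<in> nonzero_multiples w"
    unfolding projective_rep_def by (rule someI[of _ w]) (rule self_in_nonzero_multiples)
  then show ?thesis by (auto simp: nonzero_multiples_def)
qed

lemma ex_projective_representatives:
  "\<exists>R. bij_betw (\<lambda>(a, t). t *s a) (R \<times> - {0}) (- {0 :: 'a::field^'m})"
proof -
  obtain \<sigma> where "\<forall>w. \<sigma> w \<noteq> 0 \<and> projective_rep w = \<sigma> w *s (w :: 'a^'m)"
    using ex_projective_rep_factor by metis
  then have \<sigma>: "\<sigma> w \<noteq> 0" "projective_rep w = \<sigma> w *s w" for w
    by auto
  have rep_rep: "projective_rep (projective_rep w) = projective_rep w" for w :: "'a^'m"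
    using projective_rep_scale[OF \<sigma>(1)] \<sigma>(2) by metis
  define R where "R = projective_rep ` (- {0 :: 'a^'m})"
  have R_nonzero: "0 \<notin> R"
    using \<sigma> by (auto simp: R_def)
  have "inj_on (\<lambda>(a, t). t *s a) (R \<times> - {0})"
  proof (rule inj_onI)
    fix x y assume "x \<in> R \<times> - {0}" "y \<in> R \<times> - {0}" "(\<lambda>(a, t). t *s a) x = (\<lambda>(a, t). t *s a) y"
    then obtain a t b s where xy: "x = (a, t)" "y = (b, s)" and a: "a \<in> R" and b: "b \<in> R"
      and "t \<noteq> 0" "s \<noteq> 0" and ab: "t *s a = s *s b"
      by auto
    have "a = projective_rep a" "b = projective_rep b" using a b rep_rep by (auto simp: R_def)
    moreover have "projective_rep (t *s a) = projective_rep (s *s b)" using ab by simp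
    ultimately have "a = b" using projective_rep_scale \<open>t \<noteq> 0\<close> \<open>s \<noteq> 0\<close> by metis
    moreover obtain i where "a $ i \<noteq> 0" using R_nonzero a by (metis vec_eq_iff zero_index)
    ultimately have "a = b \<and> t = s" using ab by (metis mult_right_cancel vector_smult_component)
    then show "x = y" using xy by simp
  qed
  moreover have "(\<lambda>(a, t). t *s a) ` (R \<times> - {0}) = - {0}"
  proof
    show "(\<lambda>(a, t). t *s a) ` (R \<times> - {0}) \<subseteq> - {0}"
      using R_nonzero by auto
    show "- {0} \<subseteq> (\<lambda>(a, t). t *s a) ` (R \<times> - {0})"
    proof
      fix w :: "'a^'m" assume "w \<in> - {0}"
      moreover have "w = (1 / \<sigma> w) *s projective_rep w" using \<sigma> by (simp add: vector_smult_assoc)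
      ultimately show "w \<in> (\<lambda>(a, t). t *s a) ` (R \<times> - {0})"
        using \<sigma> by (auto simp: R_def intro!: image_eqI[of _ _ "(projective_rep w, 1 / \<sigma> w)"])
    qed
  qed
  ultimately show ?thesis unfolding bij_betw_def by blast
qed

lemma sum_nonzero_eq_sum_representatives:
  fixes g :: "'a::{finite,field}^'m \<Rightarrow> real"
  assumes R: "bij_betw (\<lambda>(a, t). t *s a) (R \<times> - {0}) (- {0})"
    and g: "\<And>a t. t \<noteq> 0 \<Longrightarrow> g (t *s a) = g a"
  shows "(\<Sum>a\<in>- {0}. g a) = (real CARD('a) - 1) * (\<Sum>a\<in>R. g a)"
proof -
  have "(\<Sum>a\<in>- {0}. g a) = (\<Sum>(a, t)\<in>R \<times> - {0}. g (t *s a))"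
    using sum.reindex_bij_betw[OF R, of g] by (simp add: case_prod_beta')
  also have "\<dots> = (\<Sum>a\<in>R. \<Sum>t\<in>- {0::'a}. g a)"
    by (subst sum.cartesian_product[symmetric]) (simp add: g)
  finally show ?thesis by (simp add: real_card_Compl_zero sum_distrib_left)
qed

section \<open>Weights on AG(3, q) whose line sums are 0 or 1\<close>

lemma choose_two_in_Ints:
  assumes "(z::real) \<in> \<int>"
  shows "z * (z - 1) / 2 \<in> \<int>"
proof -
  obtain n where n: "z = of_int n" using assms by (auto elim: Ints_cases)
  have "even (n * (n - 1))" by simp
  then obtain k where "n * (n - 1) = 2 * k" by (elim evenE)
  then have "z * (z - 1) / 2 = of_int k"
    unfolding n
    by (metis of_int_1 of_int_diff of_int_mult of_int_numeral nonzero_mult_div_cancel_left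
        zero_neq_numeral)
  then show ?thesis by simp
qed

lemma AG3_line_sums_identity:
  fixes F :: "'a::{finite,field}^3 \<Rightarrow> real"
  assumes "\<And>u d. d \<noteq> 0 \<Longrightarrow> line_sum F u d \<in> {0, 1}"
  shows "(\<Sum>w\<in>UNIV. F w)\<^sup>2 - (\<Sum>w\<in>UNIV. (F w)\<^sup>2)
    = ((real CARD('a))\<^sup>2 + real CARD('a) + 1) * ((\<Sum>w\<in>UNIV. F w) - (\<Sum>w\<in>UNIV. (F w)\<^sup>2))"
proof -
  define q where "q = real CARD('a)"
  define X where "X = (\<Sum>w\<in>UNIV. F w)"
  define S where "S = (\<Sum>w\<in>UNIV. (F w)\<^sup>2)"
  have "q - 1 \<noteq> 0" using card_field_ge_2[where 'a = 'a] by (simp add: q_def)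
  moreover have "(q - 1) * ((q\<^sup>2 + q + 1) * X) = (q - 1) * ((q\<^sup>2 + q + 1) * S + (X\<^sup>2 - S))"
    using line_sums_second_moment[OF assms]
    by (simp add: q_def X_def S_def algebra_simps power2_eq_square power3_eq_cube)
  ultimately have "(q\<^sup>2 + q + 1) * X = (q\<^sup>2 + q + 1) * S + (X\<^sup>2 - S)"
    by (simp only: mult_cancel_left) simp
  then show ?thesis
    by (simp add: q_def X_def S_def algebra_simps)
qed

lemma AG3_hyperplane_pairs_identity:
  fixes F :: "'a::{finite,field}^3 \<Rightarrow> real"
  assumes R: "bij_betw (\<lambda>(a, t). t *s a) (R \<times> - {0}) (- {0})"
    and line_01: "\<And>u d. d \<noteq> 0 \<Longrightarrow> line_sum F u d \<in> {0, 1}"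
  shows "(\<Sum>a\<in>R. \<Sum>c\<in>UNIV. hyperplane_sum F a c * (hyperplane_sum F a c - 1))
    = real CARD('a) * ((real CARD('a))\<^sup>2 + real CARD('a) + 1)
      * ((\<Sum>w\<in>UNIV. F w) - (\<Sum>w\<in>UNIV. (F w)\<^sup>2))"
proof -
  define q where "q = real CARD('a)"
  define X where "X = (\<Sum>w\<in>UNIV. F w)"
  define S where "S = (\<Sum>w\<in>UNIV. (F w)\<^sup>2)"
  have lines: "X\<^sup>2 - S = (q\<^sup>2 + q + 1) * (X - S)"
    using AG3_line_sums_identity[OF line_01] by (simp add: q_def X_def S_def)
  have "(q - 1) * (\<Sum>a\<in>R. \<Sum>c\<in>UNIV. hyperplane_sum F a c * (hyperplane_sum F a c - 1))
      = (\<Sum>a\<in>- {0}. \<Sum>c\<in>UNIV. hyperplane_sum F a c * (hyperplane_sum F a c - 1))"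
    unfolding q_def
    by (simp add: sum_nonzero_eq_sum_representatives[OF R]
        sum_hyperplane_sums_scale[where F = F and g = "\<lambda>z. z * (z - 1)"])
  also have "\<dots> = (\<Sum>a\<in>- {0}. \<Sum>c\<in>UNIV. (hyperplane_sum F a c)\<^sup>2)
      - (\<Sum>a\<in>- {0::'a^3}. \<Sum>c\<in>UNIV. hyperplane_sum F a c)"
    by (simp add: power2_eq_square right_diff_distrib sum_subtractf)
  also have "\<dots> = (q ^ 3 - 1) * S + (q\<^sup>2 - 1) * (X\<^sup>2 - S) - (q ^ 3 - 1) * X"
    by (simp add: hyperplane_sums_second_moment sum_hyperplane_sum real_card_Compl_zero
        q_def X_def S_def)
  also have "\<dots> = (q - 1) * (q * (q\<^sup>2 + q + 1) * (X - S))"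
    unfolding lines by (simp add: algebra_simps power2_eq_square power3_eq_cube)
  finally show ?thesis
    using card_field_ge_2[where 'a = 'a] by (simp add: q_def X_def S_def)
qed

lemma AG3_total_weight_choose_two_multiple:
  fixes F :: "'a::{finite,field}^3 \<Rightarrow> real"
  assumes line_01: "\<And>u d. d \<noteq> 0 \<Longrightarrow> line_sum F u d \<in> {0, 1}"
  shows "\<exists>m::int. (\<Sum>w\<in>UNIV. F w) * ((\<Sum>w\<in>UNIV. F w) - 1) / 2 = of_int m * (real CARD('a) + 1)"
proof -
  define q where "q = real CARD('a)"
  define X where "X = (\<Sum>w\<in>UNIV. F w)"
  define S where "S = (\<Sum>w\<in>UNIV. (F w)\<^sup>2)"
  define Y where "Y = X * (X - 1) / 2"
  obtain R where R: "bij_betw (\<lambda>(a, t). t *s a) (R \<times> - {0}) (- {0 :: 'a^3})"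
    using ex_projective_representatives by blast
  \<comment> \<open>One summand per plane, as \<open>R\<close> contains one normal vector per projective point.\<close>
  define T where "T = (\<Sum>a\<in>R. \<Sum>c\<in>UNIV. hyperplane_sum F a c * (hyperplane_sum F a c - 1) / 2)"
  have line_ints: "line_sum F y d \<in> \<int>" if "d \<noteq> 0" for y d
    using line_01[OF that, of y] by auto
  have "Y \<in> \<int>"
    unfolding Y_def X_def by (rule choose_two_in_Ints[OF total_weight_in_Ints[OF line_ints]])
  have "T \<in> \<int>"
  proof -
    have "a \<noteq> 0" if "a \<in> R" for a
      using bij_betw_apply[OF R, of "(a, 1)"] that by auto
    then show ?thesis
      unfolding T_def by (simp add: Ints_sum choose_two_in_Ints hyperplane_sum_in_Ints line_ints)
  qed
  have T_eq: "2 * T = q * (q\<^sup>2 + q + 1) * (X - S)"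
    using AG3_hyperplane_pairs_identity[OF R line_01]
    by (simp add: T_def q_def X_def S_def sum_distrib_left)
  have "2 * Y = (X\<^sup>2 - S) - (X - S)"
    by (simp add: Y_def field_simps power2_eq_square)
  then have Y_eq: "2 * Y = q * (q + 1) * (X - S)"
    using AG3_line_sums_identity[OF line_01]
    by (simp add: q_def X_def S_def algebra_simps power2_eq_square)
  have "(q + 1) * (2 * T) = (q\<^sup>2 + q + 1) * (2 * Y)"
    unfolding T_eq Y_eq by (simp add: algebra_simps)
  \<comment> \<open>since \<open>q\<^sup>2 + q + 1 = q (q + 1) + 1\<close>:\<close>
  then have "Y = (q + 1) * (T - q * Y)"
    by (simp add: algebra_simps power2_eq_square)
  moreover have "T - q * Y \<in> \<int>"
    using \<open>T \<in> \<int>\<close> \<open>Y \<in> \<int>\<close> by (simp add: q_def)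
  ultimately show ?thesis
    unfolding Y_def X_def q_def by (metis Ints_cases mult.commute)
qed

section \<open>Counting linear subspaces\<close>

definition tuple_span :: "nat \<Rightarrow> (nat \<Rightarrow> 'a::field^'n) \<Rightarrow> ('a^'n) set" where
  "tuple_span k vs = {(\<Sum>i<k. c i *s vs i) | c. True}"

definition indep_tuples :: "nat \<Rightarrow> ('a::field^'n) set \<Rightarrow> (nat \<Rightarrow> 'a^'n) set" where
  "indep_tuples k W = {vs \<in> {..<k} \<rightarrow>\<^sub>E W. lin_indep k vs}"

definition linear_ksubspaces :: "nat \<Rightarrow> ('a::field^'n) set set" where
  "linear_ksubspaces k = {tuple_span k vs | vs. lin_indep k vs}"

lemma finite_indep_tuples: "finite (indep_tuples k (W :: ('a::{finite,field}^'n) set))"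
  by (rule finite_subset[of _ "{..<k} \<rightarrow>\<^sub>E W"]) (auto simp: indep_tuples_def intro: finite_PiE)

lemma lin_indep_cong:
  "(\<And>i. i < k \<Longrightarrow> vs i = ws i) \<Longrightarrow> lin_indep k vs = lin_indep k ws"
  unfolding lin_indep_def by (metis (no_types, lifting) lessThan_iff sum.cong)

lemma tuple_span_cong:
  "(\<And>i. i < k \<Longrightarrow> vs i = ws i) \<Longrightarrow> tuple_span k vs = tuple_span k ws"
  unfolding tuple_span_def by (metis (no_types, lifting) lessThan_iff sum.cong)

lemma subspace_tuple_span: "vec.subspace (tuple_span k vs)"
  unfolding vec.subspace_def tuple_span_def
proof (intro conjI ballI allI)
  show "0 \<in> {\<Sum>i<k. c i *s vs i |c. True}"
    by (auto intro!: exI[of _ "\<lambda>_. 0"])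
next
  fix u v assume "u \<in> {\<Sum>i<k. c i *s vs i |c. True}" "v \<in> {\<Sum>i<k. c i *s vs i |c. True}"
  then obtain c d where "u = (\<Sum>i<k. c i *s vs i)" "v = (\<Sum>i<k. d i *s vs i)" by auto
  then have "u + v = (\<Sum>i<k. (c i + d i) *s vs i)" by (simp add: sum.distrib vector_sadd_rdistrib)
  then show "u + v \<in> {\<Sum>i<k. c i *s vs i |c. True}" by auto
next
  fix a u assume "u \<in> {\<Sum>i<k. c i *s vs i |c. True}"
  then obtain c where "u = (\<Sum>i<k. c i *s vs i)" by auto
  then have "a *s u = (\<Sum>i<k. (a * c i) *s vs i)"
    by (simp add: vec_eq_iff sum_distrib_left mult.assoc)
  then show "a *s u \<in> {\<Sum>i<k. c i *s vs i |c. True}" by auto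
qed

lemma tuple_span_subset:
  assumes "vec.subspace W" and "\<And>i. i < k \<Longrightarrow> vs i \<in> W"
  shows "tuple_span k vs \<subseteq> W"
  using assms by (auto simp: tuple_span_def intro!: vec.subspace_sum vec.subspace_scale)

lemma in_tuple_span:
  assumes "i < k"
  shows "vs i \<in> tuple_span k vs"
proof -
  have "vs i = (\<Sum>j<k. (if j = i then 1 else 0) *s vs j)"
    using assms by (simp add: if_distrib[of "\<lambda>c. c *s _"] cong: if_cong)
  then show ?thesis
    unfolding tuple_span_def by (intro CollectI exI[of _ "\<lambda>j. if j = i then 1 else 0"]) simp
qed

lemma card_tuple_span:
  assumes "lin_indep k (vs :: nat \<Rightarrow> 'a::{finite,field}^'n)"
  shows "card (tuple_span k vs) = CARD('a) ^ k"
proof -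
  let ?P = "{..<k} \<rightarrow>\<^sub>E (UNIV :: 'a set)"
  let ?g = "\<lambda>c. (\<Sum>i<k. c i *s vs i)"
  have "tuple_span k vs = ?g ` ?P"
  proof
    show "tuple_span k vs \<subseteq> ?g ` ?P"
    proof
      fix v assume "v \<in> tuple_span k vs"
      then obtain c where "v = ?g c" unfolding tuple_span_def by blast
      also have "\<dots> = ?g (restrict c {..<k})" by (intro sum.cong) auto
      finally have "v = ?g (restrict c {..<k})" .
      moreover have "restrict c {..<k} \<in> ?P" by simp
      ultimately show "v \<in> ?g ` ?P" by blast
    qed
  qed (auto simp: tuple_span_def)
  moreover have "inj_on ?g ?P"
  proof (rule inj_onI)
    fix c d assume c: "c \<in> ?P" and d: "d \<in> ?P" and "?g c = ?g d"
    then have "(\<Sum>i<k. (c i - d i) *s vs i) = 0"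
      by (simp add: vector_sub_rdistrib sum_subtractf)
    then have "c i = d i" if "i < k" for i
      using assms[unfolded lin_indep_def, rule_format, of "\<lambda>i. c i - d i" i] that by simp
    then show "c = d"
      using c d by (intro PiE_ext[of c "{..<k}"]) auto
  qed
  ultimately show ?thesis by (simp add: card_image card_PiE)
qed

lemma lin_indep_SucD:
  assumes indep: "lin_indep (Suc k) (vs :: nat \<Rightarrow> 'a::field^'n)"
  shows "lin_indep k vs" and "vs k \<notin> tuple_span k vs"
proof -
  show "lin_indep k vs"
    unfolding lin_indep_def
  proof (intro allI impI)
    fix c :: "nat \<Rightarrow> 'a" and i assume "(\<Sum>i<k. c i *s vs i) = 0" and i: "i < k"
    then have "(\<Sum>i<Suc k. (c(k := 0)) i *s vs i) = 0" by simp
    then show "c i = 0"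
      using indep[unfolded lin_indep_def, rule_format, of "c(k := 0)" i] i by simp
  qed
  show "vs k \<notin> tuple_span k vs"
  proof
    assume "vs k \<in> tuple_span k vs"
    then obtain c where c: "vs k = (\<Sum>i<k. c i *s vs i)" by (auto simp: tuple_span_def)
    have "(\<Sum>i<Suc k. ((\<lambda>i. - c i)(k := 1)) i *s vs i) = vs k - (\<Sum>i<k. c i *s vs i)"
      by (simp add: vector_smult_lneg sum_negf)
    also have "\<dots> = 0" using c by simp
    finally show False
      using indep[unfolded lin_indep_def, rule_format, of "(\<lambda>i. - c i)(k := 1)" k] by simp
  qed
qed

lemma lin_indep_SucI:
  assumes indep: "lin_indep k (vs :: nat \<Rightarrow> 'a::field^'n)" and notin: "vs k \<notin> tuple_span k vs"
  shows "lin_indep (Suc k) vs"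
  unfolding lin_indep_def
proof (intro allI impI)
  fix c :: "nat \<Rightarrow> 'a" and i assume sum0: "(\<Sum>i<Suc k. c i *s vs i) = 0" and i: "i < Suc k"
  have ck: "c k = 0"
  proof (rule ccontr)
    assume ck: "c k \<noteq> 0"
    have "vs k = (1 / c k) *s (c k *s vs k)" using ck by (simp add: vector_smult_assoc)
    also have "c k *s vs k = - (\<Sum>i<k. c i *s vs i)"
      using sum0 by (simp add: eq_neg_iff_add_eq_0 add.commute)
    finally have "vs k = (\<Sum>i<k. (- c i / c k) *s vs i)"
      by (simp add: vec_eq_iff sum_distrib_left sum_negf[symmetric])
    then have "vs k \<in> tuple_span k vs"
      unfolding tuple_span_def by (intro CollectI exI[of _ "\<lambda>i. - c i / c k"]) simp
    with notin show False ..
  qed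
  then have "(\<Sum>i<k. c i *s vs i) = 0" using sum0 by simp
  then show "c i = 0"
    using indep i ck less_Suc_eq unfolding lin_indep_def by auto
qed

lemma lin_indep_Suc:
  "lin_indep (Suc k) vs \<longleftrightarrow> lin_indep k vs \<and> vs k \<notin> tuple_span k vs"
  using lin_indep_SucD lin_indep_SucI by blast

lemma indep_tuples_Suc:
  fixes W :: "('a::field^'n) set"
  shows "indep_tuples (Suc k) W
    = (\<lambda>(vs, v). vs(k := v)) ` (SIGMA vs:indep_tuples k W. W - tuple_span k vs)"
proof
  show "indep_tuples (Suc k) W \<subseteq> (\<lambda>(vs, v). vs(k := v)) ` (SIGMA vs:indep_tuples k W. W - tuple_span k vs)"
  proof
    fix ws assume "ws \<in> indep_tuples (Suc k) W"
    then have ws: "ws \<in> insert k {..<k} \<rightarrow>\<^sub>E W"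
      and indep: "lin_indep k ws" and notin: "ws k \<notin> tuple_span k ws"
      by (simp_all add: indep_tuples_def lin_indep_Suc lessThan_Suc)
    let ?vs = "ws(k := undefined)"
    have "lin_indep k ?vs = lin_indep k ws" by (rule lin_indep_cong) simp
    moreover have "tuple_span k ?vs = tuple_span k ws" by (rule tuple_span_cong) simp
    moreover have "?vs \<in> {..<k} \<rightarrow>\<^sub>E W" using fun_upd_in_PiE[OF _ ws] by simp
    moreover have "ws k \<in> W" using ws by blast
    ultimately have "(?vs, ws k) \<in> (SIGMA vs:indep_tuples k W. W - tuple_span k vs)"
      using indep notin by (simp add: indep_tuples_def)
    then show "ws \<in> (\<lambda>(vs, v). vs(k := v)) ` (SIGMA vs:indep_tuples k W. W - tuple_span k vs)"
      by (rule rev_image_eqI) simp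
  qed
next
  show "(\<lambda>(vs, v). vs(k := v)) ` (SIGMA vs:indep_tuples k W. W - tuple_span k vs) \<subseteq> indep_tuples (Suc k) W"
  proof clarify
    fix vs v assume vs: "vs \<in> indep_tuples k W" and v: "v \<in> W" "v \<notin> tuple_span k vs"
    have "lin_indep k (vs(k := v)) = lin_indep k vs" by (rule lin_indep_cong) simp
    moreover have "tuple_span k (vs(k := v)) = tuple_span k vs" by (rule tuple_span_cong) simp
    moreover have "vs(k := v) \<in> insert k {..<k} \<rightarrow>\<^sub>E W"
      using vs v by (simp add: PiE_fun_upd indep_tuples_def)
    ultimately show "vs(k := v) \<in> indep_tuples (Suc k) W"
      using vs v by (simp add: indep_tuples_def lin_indep_Suc lessThan_Suc)
  qed
qed

lemma inj_on_fun_upd_PiE: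
  assumes "k \<notin> S"
  shows "inj_on (\<lambda>(vs, v). vs(k := v)) ((S \<rightarrow>\<^sub>E W) \<times> UNIV)"
proof (rule inj_onI)
  fix x y assume x: "x \<in> (S \<rightarrow>\<^sub>E W) \<times> UNIV" and y: "y \<in> (S \<rightarrow>\<^sub>E W) \<times> UNIV"
    and eq: "(\<lambda>(vs, v). vs(k := v)) x = (\<lambda>(vs, v). vs(k := v)) y"
  obtain vs v ws w where xy: "x = (vs, v)" "y = (ws, w)" by (cases x, cases y) blast
  have "vs k = ws k"
    using x y xy assms PiE_arb[of vs S "\<lambda>_. W" k] PiE_arb[of ws S "\<lambda>_. W" k] by simp
  moreover have upd: "vs(k := v) = ws(k := w)" using eq xy by simp
  have "vs i = ws i" if "i \<noteq> k" for i
    using fun_cong[OF upd, of i] that by simp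
  with \<open>vs k = ws k\<close> have "vs = ws" by (metis ext)
  moreover have "v = w" using fun_cong[OF upd, of k] by simp
  ultimately show "x = y" using xy by simp
qed

lemma card_indep_tuples:
  fixes W :: "('a::{finite,field}^'n) set"
  assumes W: "vec.subspace W" and card_W: "card W = CARD('a) ^ m" and "k \<le> m"
  shows "card (indep_tuples k W) = (\<Prod>j<k. CARD('a) ^ m - CARD('a) ^ j)"
  using \<open>k \<le> m\<close>
proof (induction k)
  case 0
  have "indep_tuples 0 W = {\<lambda>_. undefined}"
    by (simp add: indep_tuples_def lin_indep_def)
  then show ?case by simp
next
  case (Suc k)
  have "inj_on (\<lambda>(vs, v). vs(k := v)) (SIGMA vs:indep_tuples k W. W - tuple_span k vs)"
    by (rule inj_on_subset[OF inj_on_fun_upd_PiE[of k "{..<k}" W]]) (auto simp: indep_tuples_def)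
  then have "card (indep_tuples (Suc k) W) = card (SIGMA vs:indep_tuples k W. W - tuple_span k vs)"
    unfolding indep_tuples_Suc by (rule card_image)
  also have "\<dots> = (\<Sum>vs\<in>indep_tuples k W. card (W - tuple_span k vs))"
    by (rule card_SigmaI) (simp_all add: finite_indep_tuples)
  also have "\<dots> = (\<Sum>vs\<in>indep_tuples k W. CARD('a) ^ m - CARD('a) ^ k)"
  proof (rule sum.cong[OF refl])
    fix vs assume "vs \<in> indep_tuples k W"
    then have vs: "vs \<in> {..<k} \<rightarrow>\<^sub>E W" and "lin_indep k vs"
      by (simp_all add: indep_tuples_def)
    have "tuple_span k vs \<subseteq> W"
      by (rule tuple_span_subset[OF W PiE_mem[OF vs]]) simp
    with \<open>lin_indep k vs\<close> show "card (W - tuple_span k vs) = CARD('a) ^ m - CARD('a) ^ k"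
      by (simp add: card_Diff_subset card_tuple_span card_W)
  qed
  also have "\<dots> = (\<Prod>j<Suc k. CARD('a) ^ m - CARD('a) ^ j)"
    using Suc by simp
  finally show ?case .
qed

lemma indep_tuples_spanning:
  fixes ws :: "nat \<Rightarrow> 'a::{finite,field}^'n"
  assumes "lin_indep k ws"
  shows "{vs \<in> indep_tuples k UNIV. tuple_span k vs = tuple_span k ws} = indep_tuples k (tuple_span k ws)"
proof
  show "{vs \<in> indep_tuples k UNIV. tuple_span k vs = tuple_span k ws} \<subseteq> indep_tuples k (tuple_span k ws)"
    using in_tuple_span by (fastforce simp: indep_tuples_def PiE_iff)
next
  show "indep_tuples k (tuple_span k ws) \<subseteq> {vs \<in> indep_tuples k UNIV. tuple_span k vs = tuple_span k ws}"
  proof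
    fix vs assume vs: "vs \<in> indep_tuples k (tuple_span k ws)"
    then have "tuple_span k vs \<subseteq> tuple_span k ws"
      by (intro tuple_span_subset subspace_tuple_span) (auto simp: indep_tuples_def)
    then have "tuple_span k vs = tuple_span k ws"
      using vs assms by (intro card_subset_eq) (simp_all add: indep_tuples_def card_tuple_span)
    then show "vs \<in> {vs \<in> indep_tuples k UNIV. tuple_span k vs = tuple_span k ws}"
      using vs by (auto simp: indep_tuples_def PiE_iff)
  qed
qed

lemma card_linear_ksubspaces_mult:
  assumes "k \<le> CARD('n)"
  shows "card (linear_ksubspaces k :: ('a::{finite,field}^'n) set set) * (\<Prod>j<k. CARD('a) ^ k - CARD('a) ^ j)
     = (\<Prod>j<k. CARD('a) ^ CARD('n) - CARD('a) ^ j)"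
proof -
  let ?I = "indep_tuples k (UNIV :: ('a^'n) set)"
  have spans: "tuple_span k ` ?I \<subseteq> linear_ksubspaces k"
    by (auto simp: indep_tuples_def linear_ksubspaces_def)
  have "card ?I = (\<Sum>W\<in>linear_ksubspaces k. card {vs \<in> ?I. tuple_span k vs = W})"
    using sum.group[OF finite_indep_tuples finite spans, where h = "\<lambda>_. 1::nat"] by simp
  also have "\<dots> = (\<Sum>W\<in>(linear_ksubspaces k :: ('a^'n) set set). \<Prod>j<k. CARD('a) ^ k - CARD('a) ^ j)"
  proof (rule sum.cong[OF refl])
    fix W :: "('a^'n) set" assume "W \<in> linear_ksubspaces k"
    then obtain ws where ws: "lin_indep k ws" and W: "W = tuple_span k ws"
      by (auto simp: linear_ksubspaces_def)
    show "card {vs \<in> ?I. tuple_span k vs = W} = (\<Prod>j<k. CARD('a) ^ k - CARD('a) ^ j)"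
      unfolding W indep_tuples_spanning[OF ws]
      by (rule card_indep_tuples) (simp_all add: subspace_tuple_span card_tuple_span ws)
  qed
  finally show ?thesis
    using card_indep_tuples[of "UNIV :: ('a^'n) set" "CARD('n)" k] assms by (simp add: mult.commute)
qed

lemma prod_power_diff_power:
  fixes q :: real
  assumes "k \<le> N"
  shows "(\<Prod>j<k. q ^ N - q ^ j) = (\<Prod>j<k. q ^ j) * (\<Prod>j<k. q ^ (N - j) - 1)"
proof -
  have "q ^ N - q ^ j = q ^ j * (q ^ (N - j) - 1)" if "j < k" for j
    using that assms by (simp add: algebra_simps flip: power_add)
  then show ?thesis by (simp add: prod.distrib)
qed

lemma card_linear_ksubspaces:
  assumes "k \<le> CARD('n)"
  shows "real (card (linear_ksubspaces k :: ('a::{finite,field}^'n) set set))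
    = gauss_binom CARD('a) CARD('n) k"
proof -
  define q where "q = real CARD('a)"
  define C where "C = real (card (linear_ksubspaces k :: ('a^'n) set set))"
  have q2: "q \<ge> 2" unfolding q_def using card_field_ge_2[where 'a = 'a] by simp
  have mono: "CARD('a) ^ j \<le> CARD('a) ^ i" if "j \<le> i" for i j
    using that by (rule power_increasing) simp
  have "C * (\<Prod>j<k. q ^ k - q ^ j) = (\<Prod>j<k. q ^ CARD('n) - q ^ j)"
    using arg_cong[OF card_linear_ksubspaces_mult[OF assms, where 'a = 'a], of real] assms
    by (simp add: C_def q_def mono)
  then have "C * (\<Prod>j<k. q ^ j) * (\<Prod>j<k. q ^ (k - j) - 1)
      = (\<Prod>j<k. q ^ j) * (\<Prod>j<k. q ^ (CARD('n) - j) - 1)"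
    using prod_power_diff_power[OF assms, of q] prod_power_diff_power[of k k q] by simp
  moreover have "(\<Prod>j<k. q ^ j) \<noteq> 0" using q2 by simp
  ultimately have "C * (\<Prod>j<k. q ^ (k - j) - 1) = (\<Prod>j<k. q ^ (CARD('n) - j) - 1)"
    by simp
  moreover have "(\<Prod>j<k. q ^ (k - j) - 1) = (\<Prod>i<k. q ^ (i + 1) - 1)"
    by (rule prod.reindex_bij_witness[of _ "\<lambda>i. k - 1 - i" "\<lambda>i. k - 1 - i"])
       (auto simp: Suc_diff_Suc)
  moreover have "(\<Prod>i<k. q ^ (i + 1) - 1) \<noteq> 0"
    using q2 by (intro less_imp_neq[symmetric] prod_pos) (simp del: power_Suc)
  ultimately have "C = (\<Prod>i<k. q ^ (CARD('n) - i) - 1) / (\<Prod>i<k. q ^ (i + 1) - 1)"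
    by (simp add: eq_divide_eq)
  then show ?thesis
    unfolding gauss_binom_def C_def q_def by (simp add: prod_dividef)
qed

lemma gauss_binom_pos:
  assumes "k \<le> N" and "q \<ge> 2"
  shows "gauss_binom q N k > 0"
  unfolding gauss_binom_def
proof (rule prod_pos)
  fix i assume "i \<in> {..<k}"
  then show "(real q ^ (N - i) - 1) / (real q ^ (i + 1) - 1) > 0"
    using assms by (intro divide_pos_pos) (simp_all del: power_Suc)
qed

section \<open>The parameter as a total weight\<close>

lemma affine_kspace_through:
  fixes S :: "('a::field^'n) set"
  assumes "affine_kspace k S" and "p \<in> S"
  obtains vs where "lin_indep k vs" and "S = (+) p ` tuple_span k vs"
proof -
  obtain p0 vs where indep: "lin_indep k vs" and S: "S = {p0 + (\<Sum>i<k. c i *s vs i) | c. True}"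
    using assms(1) unfolding affine_kspace_def by blast
  obtain c0 where c0: "p = p0 + (\<Sum>i<k. c0 i *s vs i)" using assms(2) S by blast
  have "S = (+) p ` tuple_span k vs"
  proof
    show "S \<subseteq> (+) p ` tuple_span k vs"
    proof
      fix x assume "x \<in> S"
      then obtain c where "x = p0 + (\<Sum>i<k. c i *s vs i)" using S by blast
      then have "x = p + (\<Sum>i<k. (c i - c0 i) *s vs i)"
        unfolding c0 by (simp add: vector_sub_rdistrib sum_subtractf)
      then show "x \<in> (+) p ` tuple_span k vs" unfolding tuple_span_def by auto
    qed
    show "(+) p ` tuple_span k vs \<subseteq> S"
    proof
      fix x assume "x \<in> (+) p ` tuple_span k vs"
      then obtain c where "x = p + (\<Sum>i<k. c i *s vs i)" unfolding tuple_span_def by blast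
      then have "x = p0 + (\<Sum>i<k. (c0 i + c i) *s vs i)"
        unfolding c0 by (simp add: vector_sadd_rdistrib sum.distrib add.assoc)
      then show "x \<in> S" unfolding S by auto
    qed
  qed
  with indep show thesis by (rule that)
qed

lemma affine_kspaces_through_eq:
  "{S. affine_kspace k S \<and> p \<in> S} = (\<lambda>W. (+) p ` W) ` (linear_ksubspaces k :: ('a::field^'n) set set)"
proof
  show "{S. affine_kspace k S \<and> p \<in> S} \<subseteq> (\<lambda>W. (+) p ` W) ` linear_ksubspaces k"
    by (auto simp: linear_ksubspaces_def elim!: affine_kspace_through)
  show "(\<lambda>W. (+) p ` W) ` linear_ksubspaces k \<subseteq> {S. affine_kspace k S \<and> p \<in> S}"
  proof clarify
    fix W :: "('a^'n) set" assume "W \<in> linear_ksubspaces k"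
    then obtain vs where indep: "lin_indep k vs" and W: "W = tuple_span k vs"
      by (auto simp: linear_ksubspaces_def)
    have "(+) p ` W = {p + (\<Sum>i<k. c i *s vs i) | c. True}"
      unfolding W tuple_span_def by blast
    then have "affine_kspace k ((+) p ` W)"
      unfolding affine_kspace_def using indep by blast
    moreover have "p \<in> (+) p ` W"
      using vec.subspace_0[OF subspace_tuple_span] W by force
    ultimately show "affine_kspace k ((+) p ` W) \<and> p \<in> (+) p ` W" ..
  qed
qed

lemma card_affine_kspaces_through:
  fixes p :: "'a::{finite,field}^'n"
  shows "card {S. affine_kspace k S \<and> p \<in> S} = card (linear_ksubspaces k :: ('a^'n) set set)"
proof -
  have "inj ((+) p :: 'a^'n \<Rightarrow> 'a^'n)" by (rule injI) simp
  then show ?thesis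
    unfolding affine_kspaces_through_eq by (intro card_image inj_onI) (simp add: inj_image_eq_iff)
qed

lemma card_eq_total_weight_mult:
  fixes L :: "('a::{finite,field}^'n) set set" and f :: "'a^'n \<Rightarrow> real"
  assumes "L \<subseteq> {S. affine_kspace k S}"
    and "\<And>S. affine_kspace k S \<Longrightarrow> (if S \<in> L then 1 else 0) = (\<Sum>p\<in>S. f p)"
  shows "real (card L) = (\<Sum>p\<in>UNIV. f p) * real (card (linear_ksubspaces k :: ('a^'n) set set))"
proof -
  let ?A = "{S :: ('a^'n) set. affine_kspace k S}"
  have "real (card L) = (\<Sum>S\<in>?A. if S \<in> L then 1 else 0)"
    using assms(1) by (simp add: sum.If_cases Int_absorb1)
  also have "\<dots> = (\<Sum>S\<in>?A. \<Sum>p\<in>UNIV. if p \<in> S then f p else 0)"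
    using assms(2) by (simp add: sum.If_cases)
  also have "\<dots> = (\<Sum>p\<in>UNIV. f p * real (card {S. affine_kspace k S \<and> p \<in> S}))"
    by (subst sum.swap) (simp add: sum.If_cases Int_def mult.commute)
  also have "\<dots> = (\<Sum>p\<in>UNIV. f p) * real (card (linear_ksubspaces k :: ('a^'n) set set))"
    by (simp add: card_affine_kspaces_through sum_distrib_right)
  finally show ?thesis .
qed

lemma cl_parameter_eq_total_weight:
  fixes L :: "('a::{finite,field}^'n) set set" and f :: "'a^'n \<Rightarrow> real"
  assumes "k \<le> CARD('n)"
    and "L \<subseteq> {S. affine_kspace k S}"
    and "\<And>S. affine_kspace k S \<Longrightarrow> (if S \<in> L then 1 else 0) = (\<Sum>p\<in>S. f p)"
  shows "cl_parameter k L = (\<Sum>p\<in>UNIV. f p)"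
proof -
  have "gauss_binom CARD('a) CARD('n) k > 0"
    using assms(1) card_field_ge_2 by (rule gauss_binom_pos)
  then show ?thesis
    using card_eq_total_weight_mult[OF assms(2,3)]
    by (simp add: cl_parameter_def card_linear_ksubspaces[OF assms(1)])
qed

section \<open>Projection onto a subset of the coordinates\<close>

context
  fixes h :: "'k::finite \<Rightarrow> 'n::finite" and e :: "nat \<Rightarrow> 'n" and m :: nat
  assumes inj_h: "inj h" and e: "bij_betw e {..<m} (- range h)"
begin

definition coord_proj :: "'a::field^'n \<Rightarrow> 'a^'k" where
  "coord_proj v = (\<chi> j. v $ h j)"

definition coord_lift :: "'a::field^'k \<Rightarrow> 'a^'n" where
  "coord_lift z = (\<chi> i. if i \<in> range h then z $ inv h i else 0)"

definition preimage_line_basis :: "'a::field^'k \<Rightarrow> nat \<Rightarrow> 'a^'n" where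
  "preimage_line_basis d i = (case i of 0 \<Rightarrow> coord_lift d | Suc j \<Rightarrow> axis (e j) 1)"

lemma coord_proj_component [simp]: "coord_proj v $ j = v $ h j"
  by (simp add: coord_proj_def)

lemma coord_lift_component_h [simp]: "coord_lift z $ h j = z $ j"
  using inj_h by (simp add: coord_lift_def)

lemma coord_lift_component_e [simp]: "j < m \<Longrightarrow> coord_lift z $ e j = 0"
  using e by (auto simp: coord_lift_def bij_betw_def)

lemma coordinate_cases:
  obtains j where "i = h j" | j where "j < m" and "i = e j"
proof (cases "i \<in> range h")
  case False
  then have "i \<in> e ` {..<m}" using e by (simp add: bij_betw_def)
  then show thesis using that(2) by blast
qed (use that(1) in blast)

lemma preimage_line_basis_combination:
  fixes c :: "nat \<Rightarrow> 'a::field" and d :: "'a^'k"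
  defines "s \<equiv> (\<Sum>i<Suc m. c i *s preimage_line_basis d i)"
  shows "s $ h l = c 0 * d $ l" and "j < m \<Longrightarrow> s $ e j = c (Suc j)"
proof -
  have s: "s $ i = c 0 * coord_lift d $ i + (\<Sum>j'<m. if e j' = i then c (Suc j') else 0)" for i
    unfolding s_def
    by (simp only: sum.lessThan_Suc_shift)
       (auto simp: preimage_line_basis_def axis_def intro!: sum.cong)
  have "e j' \<noteq> h l" if "j' < m" for j'
    using that e by (auto simp: bij_betw_def)
  then show "s $ h l = c 0 * d $ l"
    by (simp add: s)
  assume "j < m"
  moreover have "e j' = e j \<longleftrightarrow> j' = j" if "j' < m" for j'
    using that \<open>j < m\<close> e by (auto simp: bij_betw_def inj_on_def)
  ultimately show "s $ e j = c (Suc j)"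
    by (simp add: s cong: if_cong)
qed

lemma lin_indep_preimage_line_basis:
  assumes "d \<noteq> 0"
  shows "lin_indep (Suc m) (preimage_line_basis d)"
  unfolding lin_indep_def
proof (intro allI impI)
  fix c :: "nat \<Rightarrow> 'a" and i
  assume zero: "(\<Sum>i<Suc m. c i *s preimage_line_basis d i) = 0" and "i < Suc m"
  obtain l where "d $ l \<noteq> 0" using assms by (metis vec_eq_iff zero_index)
  then have "c 0 = 0"
    using preimage_line_basis_combination(1)[of c d l] zero by (simp del: sum.lessThan_Suc)
  moreover have "c (Suc j) = 0" if "j < m" for j
    using preimage_line_basis_combination(2)[OF that, of c d] zero by (simp del: sum.lessThan_Suc)
  ultimately show "c i = 0"
    using \<open>i < Suc m\<close> by (cases i) auto
qed

lemma preimage_line_eq: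
  "{v. \<exists>t. coord_proj v = y + t *s d}
    = {coord_lift y + (\<Sum>i<Suc m. c i *s preimage_line_basis d i) | c. True}"
proof
  show "{v. \<exists>t. coord_proj v = y + t *s d}
    \<subseteq> {coord_lift y + (\<Sum>i<Suc m. c i *s preimage_line_basis d i) | c. True}"
  proof
    fix v assume "v \<in> {v. \<exists>t. coord_proj v = y + t *s d}"
    then obtain t where t: "coord_proj v = y + t *s d" by blast
    define c where "c i = (case i of 0 \<Rightarrow> t | Suc j \<Rightarrow> v $ e j)" for i
    have c: "c 0 = t" "c (Suc j) = v $ e j" for j by (simp_all add: c_def)
    have "v $ i = (coord_lift y + (\<Sum>i<Suc m. c i *s preimage_line_basis d i)) $ i" for i
    proof (cases i rule: coordinate_cases)
      case (1 l)
      have "v $ h l = y $ l + t * d $ l"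
        using t by (metis coord_proj_component vector_add_component vector_smult_component)
      then show ?thesis
        by (simp only: 1 vector_add_component preimage_line_basis_combination(1) coord_lift_component_h c)
    next
      case (2 j)
      then show ?thesis
        by (simp only: vector_add_component preimage_line_basis_combination(2) coord_lift_component_e c) simp
    qed
    then show "v \<in> {coord_lift y + (\<Sum>i<Suc m. c i *s preimage_line_basis d i) | c. True}"
      by (auto simp: vec_eq_iff)
  qed
  show "{coord_lift y + (\<Sum>i<Suc m. c i *s preimage_line_basis d i) | c. True}
    \<subseteq> {v. \<exists>t. coord_proj v = y + t *s d}"
  proof clarify
    fix c :: "nat \<Rightarrow> 'a"
    have "coord_proj (coord_lift y + (\<Sum>i<Suc m. c i *s preimage_line_basis d i)) = y + c 0 *s d"
      by (simp only: vec_eq_iff coord_proj_component vector_add_component vector_smult_component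
          preimage_line_basis_combination(1) coord_lift_component_h) simp
    then show "\<exists>t. coord_proj (coord_lift y + (\<Sum>i<Suc m. c i *s preimage_line_basis d i)) = y + t *s d"
      by blast
  qed
qed

lemma affine_kspace_preimage_line:
  assumes "d \<noteq> 0"
  shows "affine_kspace (Suc m) {v. \<exists>t. coord_proj v = y + t *s d}"
  unfolding affine_kspace_def preimage_line_eq using lin_indep_preimage_line_basis[OF assms] by blast

lemma line_sum_pushforward:
  fixes f :: "'a::{finite,field}^'n \<Rightarrow> real"
  assumes "d \<noteq> 0"
  shows "line_sum (\<lambda>z. \<Sum>v | coord_proj v = z. f v) y d = (\<Sum>v | \<exists>t. coord_proj v = y + t *s d. f v)"
proof -
  obtain l where "d $ l \<noteq> 0" using assms by (metis vec_eq_iff zero_index)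
  then have "y + t *s d \<noteq> y + t' *s d" if "t \<noteq> t'" for t t'
    using that by (metis add_left_cancel mult_right_cancel vector_smult_component)
  then have "(\<Sum>v\<in>(\<Union>t. {v. coord_proj v = y + t *s d}). f v)
      = (\<Sum>t\<in>UNIV. \<Sum>v | coord_proj v = y + t *s d. f v)"
    by (intro sum.UNION_disjoint) auto
  moreover have "(\<Union>t. {v. coord_proj v = y + t *s d}) = {v. \<exists>t. coord_proj v = y + t *s d}"
    by blast
  ultimately show ?thesis by (simp add: line_sum_def)
qed

lemma pushforward_line_sum_in_01:
  fixes f :: "'a::{finite,field}^'n \<Rightarrow> real"
  assumes "\<And>S. affine_kspace (Suc m) S \<Longrightarrow> (if S \<in> L then 1 else 0) = (\<Sum>p\<in>S. f p)"
    and "d \<noteq> 0"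
  shows "line_sum (\<lambda>z. \<Sum>v | coord_proj v = z. f v) y d \<in> {0, 1}"
  unfolding line_sum_pushforward[OF assms(2)]
    assms(1)[OF affine_kspace_preimage_line[OF assms(2)], symmetric]
  by simp

end

lemma ex_coordinate_split:
  assumes "CARD('k) \<le> CARD('n)"
  obtains h :: "'k::finite \<Rightarrow> 'n::finite" and e
  where "inj h" and "bij_betw e {..<CARD('n) - CARD('k)} (- range h)"
proof -
  obtain h :: "'k \<Rightarrow> 'n" where h: "inj h"
    using card_le_inj[of "UNIV :: 'k set" "UNIV :: 'n set"] assms by auto
  have "card (- range h) = CARD('n) - CARD('k)"
    using card_image[OF h] by (simp add: Compl_eq_Diff_UNIV card_Diff_subset)
  then obtain e where "bij_betw e {..<CARD('n) - CARD('k)} (- range h)"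
    using ex_bij_betw_nat_finite[of "- range h"] by (auto simp: atLeast0LessThan)
  with h show thesis by (rule that)
qed

theorem theorem6p15:
  fixes L :: "('a::{finite,field} ^ 'n) set set" and x :: real
  assumes "CARD('n) \<ge> 3"
    and "cameron_liebler_kset (CARD('n) - 2) L"
    and "x = cl_parameter (CARD('n) - 2) L"
  shows "\<exists>m::int. x * (x - 1) / 2 = real_of_int m * (real CARD('a) + 1)"
proof -
  obtain f :: "'a^'n \<Rightarrow> real" where L: "L \<subseteq> {S. affine_kspace (CARD('n) - 2) S}"
    and f: "\<And>S. affine_kspace (CARD('n) - 2) S \<Longrightarrow> (if S \<in> L then 1 else 0) = (\<Sum>p\<in>S. f p)"
    using assms(2) unfolding cameron_liebler_kset_def by blast
  have x: "x = (\<Sum>p\<in>UNIV. f p)"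
    using assms(3) cl_parameter_eq_total_weight[OF _ L f] by simp
  obtain h :: "3 \<Rightarrow> 'n" and e where h: "inj h" and e: "bij_betw e {..<CARD('n) - 3} (- range h)"
    using ex_coordinate_split[where 'k = 3] assms(1) by auto
  have k: "CARD('n) - 2 = Suc (CARD('n) - 3)" using assms(1) by simp
  define F :: "'a^3 \<Rightarrow> real" where "F = (\<lambda>z. \<Sum>v | coord_proj h v = z. f v)"
  have "line_sum F y d \<in> {0, 1}" if "d \<noteq> 0" for y d
    unfolding F_def by (rule pushforward_line_sum_in_01[OF h e f[unfolded k] that])
  moreover have "(\<Sum>z\<in>UNIV. F z) = (\<Sum>p\<in>UNIV. f p)"
    unfolding F_def using sum.group[of UNIV UNIV "coord_proj h" f] by simp
  ultimately show ?thesis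
    using AG3_total_weight_choose_two_multiple[of F] x by simp
qed

end
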